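(* Let $(\Gamma,\Lambda)$ be a Hecke pair with $\Lambda$ isomorphic to $\mathbb{Z}^n$. Then $\mathbb{R}^n$ is an engulfing group of $(\Gamma,\Lambda)$.
   Context: A Hecke pair $(\Gamma,\Lambda)$ is a group $\Gamma$ with a commensurated subgroup $\Lambda$ (commensurable, i.e. finite index intersection, with all its conjugates). A locally compact group $E$ is an engulfing group of $(\Gamma,\Lambda)$ if there are a homomorphism $\rho:\Lambda\to E$ with finite kernel and discrete cocompact image, and a homomorphism $\Delta:\Gamma\to\mathrm{Aut}(E)$ extending $h\mapsto$ conjugation by $\rho(h)$ on $\Lambda$, such that for every $g\in\Gamma$, $\Delta(g)(\rho(h))=\rho(ghg^{-1})$ for all $h$ in some finite index subgroup of $\Lambda$. *)

theory Defs
  imports "HOL-Analysis.Analysis" "HOL-Algebra.Algebra"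
begin

definition finite_index_in :: "('g, 'b) monoid_scheme \<Rightarrow> 'g set \<Rightarrow> 'g set \<Rightarrow> bool" where
  "finite_index_in G H K \<longleftrightarrow>
     subgroup H (G\<lparr>carrier := K\<rparr>) \<and> finite (rcosets\<^bsub>G\<lparr>carrier := K\<rparr>\<^esub> H)"

definition hecke_pair :: "('g, 'b) monoid_scheme \<Rightarrow> 'g set \<Rightarrow> bool" where
  "hecke_pair G L \<longleftrightarrow> group G \<and> subgroup L G \<and>
     (\<forall>g \<in> carrier G.
        finite_index_in G (L \<inter> (g <#\<^bsub>G\<^esub> L #>\<^bsub>G\<^esub> inv\<^bsub>G\<^esub> g)) L \<and>
        finite_index_in G (L \<inter> (g <#\<^bsub>G\<^esub> L #>\<^bsub>G\<^esub> inv\<^bsub>G\<^esub> g)) (g <#\<^bsub>G\<^esub> L #>\<^bsub>G\<^esub> inv\<^bsub>G\<^esub> g))"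

definition top_aut :: "('e::topological_group_add \<Rightarrow> 'e) set" where
  "top_aut = {f. bij f \<and> (\<forall>x y. f (x + y) = f x + f y) \<and>
                 continuous_on UNIV f \<and> continuous_on UNIV (inv_into UNIV f)}"

definition discrete_subset :: "'e::topological_space set \<Rightarrow> bool" where
  "discrete_subset S \<longleftrightarrow> (\<forall>x\<in>S. \<exists>U. open U \<and> U \<inter> S = {x})"

definition cocompact_subgroup :: "'e::topological_group_add set \<Rightarrow> bool" where
  "cocompact_subgroup S \<longleftrightarrow> (\<exists>K. compact K \<and> (\<Union>s\<in>S. (\<lambda>k. k + s) ` K) = UNIV)"

text \<open>Engulfing group: the locally compact group is the whole type 'e.\<close>
definition engulfing_group :: "('g, 'b) monoid_scheme \<Rightarrow> 'g set \<Rightarrow> 'e::topological_group_add itself \<Rightarrow> bool" where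
  "engulfing_group G L E \<longleftrightarrow>
     locally_compact_space (euclidean :: 'e topology) \<and>
     (\<exists>(\<rho> :: 'g \<Rightarrow> 'e) (\<Delta> :: 'g \<Rightarrow> 'e \<Rightarrow> 'e).
        (\<forall>h1\<in>L. \<forall>h2\<in>L. \<rho> (h1 \<otimes>\<^bsub>G\<^esub> h2) = \<rho> h1 + \<rho> h2) \<and>
        finite {h\<in>L. \<rho> h = 0} \<and>
        discrete_subset (\<rho> ` L) \<and> cocompact_subgroup (\<rho> ` L) \<and>
        (\<forall>g\<in>carrier G. \<Delta> g \<in> top_aut) \<and>
        (\<forall>g1\<in>carrier G. \<forall>g2\<in>carrier G. \<Delta> (g1 \<otimes>\<^bsub>G\<^esub> g2) = \<Delta> g1 \<circ> \<Delta> g2) \<and>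
        (\<forall>h\<in>L. \<forall>x. \<Delta> h x = \<rho> h + x - \<rho> h) \<and>
        (\<forall>g\<in>carrier G. \<exists>L'. finite_index_in G L' L \<and>
            (\<forall>h\<in>L'. g \<otimes>\<^bsub>G\<^esub> h \<otimes>\<^bsub>G\<^esub> inv\<^bsub>G\<^esub> g \<in> L \<and>
                     \<Delta> g (\<rho> h) = \<rho> (g \<otimes>\<^bsub>G\<^esub> h \<otimes>\<^bsub>G\<^esub> inv\<^bsub>G\<^esub> g))))"

text \<open>The group Z^n, with n = CARD('n).\<close>
definition Zn_group :: "'n::finite itself \<Rightarrow> (int ^ 'n) monoid" where
  "Zn_group N = \<lparr>carrier = UNIV, monoid.mult = (+), one = 0\<rparr>"

end

theory Submission
  imports Defs
begin

text \<open>
  Identify \<open>L\<close> with the lattice \<open>\<int>\<^sup>n \<subseteq> \<real>\<^sup>n\<close>. Since \<open>L \<inter> g\<^sup>-\<^sup>1 L g\<close> has finite index in the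
  abelian group \<open>L\<close>, there is an \<open>m > 0\<close> with \<open>g h\<^sup>m g\<^sup>-\<^sup>1 \<in> L\<close> for all \<open>h \<in> L\<close>. Then
  \<open>h \<mapsto> (1/m) g h\<^sup>m g\<^sup>-\<^sup>1\<close> is additive on \<open>\<int>\<^sup>n\<close> and extends to a linear map \<open>\<Delta> g\<close> of \<open>\<real>\<^sup>n\<close>,
  which agrees with conjugation by \<open>g\<close> wherever the latter stays in \<open>L\<close>. A linear map is
  determined by its values on positive multiples of lattice points, so \<open>\<Delta>\<close> is multiplicative
  and trivial on \<open>L\<close>; in particular every \<open>\<Delta> g\<close> is an invertible linear map, hence a
  topological automorphism.
\<close>

definition of_int_vec :: "int ^ 'n::finite \<Rightarrow> real ^ 'n" where
  "of_int_vec a = (\<chi> i. of_int (a $ i))"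

lemma of_int_vec_nth [simp]: "of_int_vec a $ i = of_int (a $ i)"
  by (simp add: of_int_vec_def)

lemma of_int_vec_add: "of_int_vec (a + b) = of_int_vec a + of_int_vec b"
  by (simp add: vec_eq_iff)

lemma of_int_vec_eq_iff [simp]: "of_int_vec a = of_int_vec b \<longleftrightarrow> a = b"
  by (simp add: vec_eq_iff)

lemma of_int_vec_eq_0_iff [simp]: "of_int_vec a = 0 \<longleftrightarrow> a = 0"
  by (simp add: vec_eq_iff)

lemma of_int_vec_axis: "of_int_vec (axis i 1) = axis i 1"
  by (simp add: vec_eq_iff axis_def)

lemma additive_int_eq_scaleR:
  fixes f :: "int \<Rightarrow> 'b::real_vector"
  assumes "Modules.additive f"
  shows "f k = of_int k *\<^sub>R f 1"
proof (induction k rule: int_induct[where k = 0])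
  case base
  show ?case using additive.zero[OF assms] by simp
next
  case (step1 k)
  then show ?case using additive.add[OF assms, of k 1] by (simp add: algebra_simps)
next
  case (step2 k)
  then show ?case using additive.diff[OF assms, of k 1] by (simp add: algebra_simps)
qed

definition lattice_extension :: "(int ^ 'n::finite \<Rightarrow> 'b::real_vector) \<Rightarrow> real ^ 'n \<Rightarrow> 'b" where
  "lattice_extension f x = (\<Sum>i\<in>UNIV. x $ i *\<^sub>R f (axis i 1))"

lemma linear_lattice_extension: "linear (lattice_extension f)"
  unfolding lattice_extension_def[abs_def]
  by (rule linearI) (simp_all add: scaleR_add_left sum.distrib scaleR_sum_right)

lemma lattice_extension_of_int_vec:
  assumes f: "Modules.additive f"
  shows "lattice_extension f (of_int_vec a) = f a"
proof -
  have "Modules.additive (\<lambda>k. f (k *s v))" for v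
    by standard (simp add: vector_sadd_rdistrib additive.add[OF f])
  then have scale: "f (k *s v) = of_int k *\<^sub>R f v" for k v
    using additive_int_eq_scaleR by fastforce
  have "f a = f (\<Sum>i\<in>UNIV. a $ i *s axis i 1)"
    by (simp only: basis_expansion)
  also have "\<dots> = (\<Sum>i\<in>UNIV. f (a $ i *s axis i 1))"
    by (rule additive.sum[OF f])
  finally show ?thesis
    by (simp add: lattice_extension_def scale)
qed

lemma linear_eq_on_lattice:
  fixes f g :: "real ^ 'n::finite \<Rightarrow> 'b::real_vector"
  assumes "linear f" "linear g" "\<And>a. f (of_int_vec a) = g (of_int_vec a)"
  shows "f = g"
proof (rule linear_eq_stdbasis[OF assms(1,2)])
  fix b :: "real ^ 'n"
  assume "b \<in> Basis"
  then obtain i where "b = axis i 1"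
    by (auto simp: Basis_vec_def)
  then show "f b = g b"
    using assms(3)[of "axis i 1"] by (simp add: of_int_vec_axis)
qed

lemma discrete_subset_range_of_int_vec: "discrete_subset (range of_int_vec)"
  unfolding discrete_subset_def
proof
  fix x :: "real ^ 'n"
  assume x: "x \<in> range of_int_vec"
  then obtain a where a: "x = of_int_vec a" by blast
  have "y = x" if near: "y \<in> ball x (1/2)" and y: "y \<in> range of_int_vec" for y
  proof -
    obtain b where b: "y = of_int_vec b" using y by blast
    have "\<bar>a $ i - b $ i\<bar> < 1" for i
      using component_le_norm_cart[of "x - y" i] near a b by (simp add: dist_norm)
    then show "y = x" using a b by (simp add: vec_eq_iff)
  qed
  then have "ball x (1/2) \<inter> range of_int_vec = {x}"
    using x by (auto simp del: of_int_vec_eq_iff)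
  then show "\<exists>U. open U \<and> U \<inter> range of_int_vec = {x}"
    by blast
qed

lemma cocompact_subgroup_range_of_int_vec: "cocompact_subgroup (range of_int_vec)"
  unfolding cocompact_subgroup_def
proof (intro exI conjI)
  show "compact (cbox (0::real ^ 'n) 1)"
    by (rule compact_cbox)
  show "(\<Union>s\<in>range of_int_vec. (\<lambda>k. k + s) ` cbox 0 1) = UNIV"
  proof (rule UNIV_eq_I[symmetric])
    fix y :: "real ^ 'n"
    let ?c = "\<chi> i. \<lfloor>y $ i\<rfloor>"
    have "y - of_int_vec ?c \<in> cbox 0 1"
      unfolding mem_box_cart by simp linarith
    then have "y \<in> (\<lambda>k. k + of_int_vec ?c) ` cbox 0 1"
      by (rule rev_image_eqI) simp
    then show "y \<in> (\<Union>s\<in>range of_int_vec. (\<lambda>k. k + s) ` cbox 0 1)"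
      by (rule UN_I[OF rangeI])
  qed
qed

lemma top_aut_if_linear_inverses:
  fixes f f' :: "'a::euclidean_space \<Rightarrow> 'a"
  assumes "linear f" "linear f'" "f \<circ> f' = id" "f' \<circ> f = id"
  shows "f \<in> top_aut"
proof -
  have "bij f" using assms(3,4) by (metis o_bij)
  moreover have "inv_into UNIV f = f'"
    using inv_unique_comp[OF assms(3,4)] by simp
  ultimately show ?thesis
    using assms(1,2) linear_add[OF assms(1)]
    by (simp add: top_aut_def linear_continuous_on linear_conv_bounded_linear)
qed

lemma (in comm_group) finite_index_nat_pow_mem:
  assumes K: "subgroup K G" and fin: "finite (rcosets K)"
  shows "\<exists>m::nat. 0 < m \<and> (\<forall>h\<in>carrier G. h [^] m \<in> K)"
proof -
  interpret K: normal K G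
    using subgroup_imp_normal[OF K] .
  interpret Q: group "G Mod K"
    by (rule K.factorgroup_is_group)
  have "K \<in> rcosets K"
    using rcosetsI[of K \<one>] subgroup.subset[OF K] by simp
  then have pos: "0 < order (G Mod K)"
    using fin by (auto simp: order_def FactGroup_def card_gt_0_iff)
  have "h [^] order (G Mod K) \<in> K" if h: "h \<in> carrier G" for h
  proof -
    have "K #> h [^] order (G Mod K) = (K #> h) [^]\<^bsub>G Mod K\<^esub> order (G Mod K)"
      using hom_nat_pow[OF K.r_coset_hom_Mod h is_group Q.is_group] .
    also have "\<dots> = K"
      using Q.pow_order_eq_1[of "K #> h"] h by (simp add: FactGroup_def rcosetsI subgroup.subset[OF K])
    finally have "K #> h [^] order (G Mod K) = K" .
    then show ?thesis
      using rcos_self[OF nat_pow_closed[OF h, of "order (G Mod K)"] K] by (simp only:)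
  qed
  with pos show ?thesis
    by blast
qed

lemma (in group) conj_hom:
  assumes g: "g \<in> carrier G"
  shows "(\<lambda>x. g \<otimes> x \<otimes> inv g) \<in> hom G G"
proof (rule homI)
  fix x y
  assume "x \<in> carrier G" "y \<in> carrier G"
  then show "g \<otimes> (x \<otimes> y) \<otimes> inv g = g \<otimes> x \<otimes> inv g \<otimes> (g \<otimes> y \<otimes> inv g)"
    using g by (simp add: m_assoc) (simp add: m_assoc[symmetric])
qed (use g in simp)

lemma (in group) conj_nat_pow:
  assumes "g \<in> carrier G" "x \<in> carrier G"
  shows "g \<otimes> x [^] (k::nat) \<otimes> inv g = (g \<otimes> x \<otimes> inv g) [^] k"
  using hom_nat_pow[OF conj_hom[OF assms(1)] assms(2) is_group is_group] by simp

lemma (in group) conj_mult: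
  assumes "g \<in> carrier G" "x \<in> carrier G" "y \<in> carrier G"
  shows "g \<otimes> (x \<otimes> y) \<otimes> inv g = (g \<otimes> x \<otimes> inv g) \<otimes> (g \<otimes> y \<otimes> inv g)"
  using hom_mult[OF conj_hom[OF assms(1)] assms(2,3)] by simp

lemma (in group) mem_conj_coset_iff:
  assumes "L \<subseteq> carrier G" "g \<in> carrier G" "h \<in> carrier G"
  shows "h \<in> inv g <#\<^bsub>G\<^esub> L #> g \<longleftrightarrow> g \<otimes> h \<otimes> inv g \<in> L"
proof
  assume "h \<in> inv g <#\<^bsub>G\<^esub> L #> g"
  then obtain l where "l \<in> L" "h = inv g \<otimes> l \<otimes> g"
    by (auto simp: l_coset_def r_coset_def)
  moreover have "g \<otimes> (inv g \<otimes> l \<otimes> g) \<otimes> inv g = l"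
    using assms \<open>l \<in> L\<close> by (simp add: m_assoc[symmetric] subsetD) (simp add: m_assoc subsetD)
  ultimately show "g \<otimes> h \<otimes> inv g \<in> L"
    by simp
next
  assume "g \<otimes> h \<otimes> inv g \<in> L"
  moreover have "h = inv g \<otimes> (g \<otimes> h \<otimes> inv g) \<otimes> g"
    using assms by (simp add: m_assoc[symmetric]) (simp add: m_assoc)
  ultimately show "h \<in> inv g <#\<^bsub>G\<^esub> L #> g"
    by (auto simp: l_coset_def r_coset_def)
qed

lemma hecke_pair_conj_domain_finite_index:
  fixes G (structure)
  assumes "hecke_pair G L" "g \<in> carrier G"
  shows "finite_index_in G {h \<in> L. g \<otimes> h \<otimes> inv g \<in> L} L"
proof -
  interpret group G
    using assms(1) by (simp add: hecke_pair_def)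
  have L: "L \<subseteq> carrier G"
    using assms(1) by (simp add: hecke_pair_def subgroup.subset)
  have "finite_index_in G (L \<inter> (inv g <#\<^bsub>G\<^esub> L #> inv (inv g))) L"
    using assms(1) inv_closed[OF assms(2)] unfolding hecke_pair_def by blast
  moreover have "L \<inter> (inv g <#\<^bsub>G\<^esub> L #> inv (inv g)) = {h \<in> L. g \<otimes> h \<otimes> inv g \<in> L}"
    using mem_conj_coset_iff[OF L assms(2)] L assms(2) by auto
  ultimately show ?thesis
    by simp
qed

lemma hecke_pair_conj_nat_pow_mem:
  fixes G (structure)
  assumes "hecke_pair G L" "comm_group (G\<lparr>carrier := L\<rparr>)" "g \<in> carrier G"
  shows "\<exists>m::nat. 0 < m \<and> (\<forall>h\<in>L. g \<otimes> h [^] m \<otimes> inv g \<in> L)"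
proof -
  interpret group G
    using assms(1) by (simp add: hecke_pair_def)
  let ?K = "{h \<in> L. g \<otimes> h \<otimes> inv g \<in> L}"
  have K: "subgroup ?K (G\<lparr>carrier := L\<rparr>)" "finite (rcosets\<^bsub>G\<lparr>carrier := L\<rparr>\<^esub> ?K)"
    using hecke_pair_conj_domain_finite_index[OF assms(1,3)] by (simp_all add: finite_index_in_def)
  obtain m :: nat where "0 < m" "\<forall>h\<in>L. h [^]\<^bsub>G\<lparr>carrier := L\<rparr>\<^esub> m \<in> ?K"
    using comm_group.finite_index_nat_pow_mem[OF assms(2) K] by auto
  then show ?thesis
    by (auto simp: nat_pow_consistent[symmetric])
qed

lemma comm_group_Zn_group: "comm_group (Zn_group (N :: 'n::finite itself))"
proof (rule comm_groupI)
  fix x :: "int ^ 'n"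
  show "\<exists>y\<in>carrier (Zn_group N). y \<otimes>\<^bsub>Zn_group N\<^esub> x = \<one>\<^bsub>Zn_group N\<^esub>"
    by (intro bexI[of _ "- x"]) (simp_all add: Zn_group_def)
qed (simp_all add: Zn_group_def add.assoc add.commute)

locale lattice_hecke_pair =
  fixes G (structure) and L :: "'g set" and \<phi> :: "'g \<Rightarrow> int ^ 'n::finite"
  assumes hecke_pair: "hecke_pair G L"
    and iso: "\<phi> \<in> iso (G\<lparr>carrier := L\<rparr>) (Zn_group TYPE('n))"
begin

sublocale group G
  using hecke_pair by (simp add: hecke_pair_def)

lemma subgroup_L: "subgroup L G"
  using hecke_pair by (simp add: hecke_pair_def)

lemma mem_carrier_if_mem_L: "h \<in> L \<Longrightarrow> h \<in> carrier G"
  using subgroup.mem_carrier[OF subgroup_L] .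

lemma nat_pow_mem_L: "h \<in> L \<Longrightarrow> h [^] (k::nat) \<in> L"
  using subgroup_int_pow_closed[OF subgroup_L, of h "int k"] by (simp add: int_pow_int)

lemma comm_group_L: "comm_group (G\<lparr>carrier := L\<rparr>)"
proof -
  interpret L: group "G\<lparr>carrier := L\<rparr>"
    by (rule subgroup_imp_group[OF subgroup_L])
  have "G\<lparr>carrier := L\<rparr> \<cong> Zn_group TYPE('n)"
    using iso by (auto simp: is_iso_def)
  then have "Zn_group TYPE('n) \<cong> G\<lparr>carrier := L\<rparr>"
    by (rule L.iso_sym)
  then show ?thesis
    using comm_group.iso_imp_comm_group[OF comm_group_Zn_group] L.is_monoid by blast
qed

lemma m_comm_L:
  assumes "x \<in> L" "y \<in> L"
  shows "x \<otimes> y = y \<otimes> x"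
  using comm_monoid.m_comm[OF comm_group.axioms(1)[OF comm_group_L], of x y] assms by simp

lemma conj_mem_L: "l \<in> L \<Longrightarrow> x \<in> L \<Longrightarrow> l \<otimes> x \<otimes> inv l = x"
  using m_comm_L[of l x] by (simp add: m_assoc mem_carrier_if_mem_L)

lemma \<phi>_mult: "x \<in> L \<Longrightarrow> y \<in> L \<Longrightarrow> \<phi> (x \<otimes> y) = \<phi> x + \<phi> y"
  using iso by (simp add: iso_def hom_def Zn_group_def)

lemma \<phi>_one: "\<phi> \<one> = 0"
  using \<phi>_mult[of \<one> \<one>] subgroup.one_closed[OF subgroup_L] by simp

lemma \<phi>_inj: "inj_on \<phi> L"
  using iso by (simp add: iso_def bij_betw_def)

lemma \<phi>_surj: "\<phi> ` L = UNIV"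
  using iso by (simp add: iso_def bij_betw_def Zn_group_def)

abbreviation \<psi> :: "int ^ 'n \<Rightarrow> 'g" where
  "\<psi> \<equiv> inv_into L \<phi>"

lemma \<psi>_iso: "\<psi> \<in> iso (Zn_group TYPE('n)) (G\<lparr>carrier := L\<rparr>)"
  using group.iso_set_sym[OF subgroup_imp_group[OF subgroup_L] iso] by simp

lemma \<psi>_mem_L: "\<psi> a \<in> L"
  using \<psi>_iso by (auto simp: iso_def hom_def Zn_group_def)

lemma \<psi>_add: "\<psi> (a + b) = \<psi> a \<otimes> \<psi> b"
  using \<psi>_iso by (simp add: iso_def hom_def Zn_group_def)

lemma \<phi>_\<psi>: "\<phi> (\<psi> a) = a"
  using \<phi>_surj by (simp add: f_inv_into_f)

lemma \<psi>_\<phi>: "h \<in> L \<Longrightarrow> \<psi> (\<phi> h) = h"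
  using \<phi>_inj by simp

definition \<rho> :: "'g \<Rightarrow> real ^ 'n" where
  "\<rho> h = of_int_vec (\<phi> h)"

lemma \<rho>_mult: "x \<in> L \<Longrightarrow> y \<in> L \<Longrightarrow> \<rho> (x \<otimes> y) = \<rho> x + \<rho> y"
  by (simp add: \<rho>_def \<phi>_mult of_int_vec_add)

lemma \<rho>_one: "\<rho> \<one> = 0"
  by (simp add: \<rho>_def \<phi>_one)

lemma \<rho>_nat_pow: "h \<in> L \<Longrightarrow> \<rho> (h [^] k) = real k *\<^sub>R \<rho> h"
  by (induction k) (simp_all add: \<rho>_one \<rho>_mult nat_pow_mem_L mem_carrier_if_mem_L algebra_simps)

lemma \<rho>_kernel: "{h \<in> L. \<rho> h = 0} = {\<one>}"
  using inj_on_eq_iff[OF \<phi>_inj _ subgroup.one_closed[OF subgroup_L]] subgroup.one_closed[OF subgroup_L]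
  by (auto simp: \<rho>_def \<phi>_one)

lemma \<rho>_\<psi>: "\<rho> (\<psi> a) = of_int_vec a"
  by (simp add: \<rho>_def \<phi>_\<psi>)

lemma \<rho>_image: "\<rho> ` L = range of_int_vec"
proof -
  have "\<rho> ` L = of_int_vec ` \<phi> ` L"
    by (simp add: \<rho>_def image_image)
  then show ?thesis
    by (simp add: \<phi>_surj)
qed

definition conj_exponent :: "'g \<Rightarrow> nat" where
  "conj_exponent g = (SOME m. 0 < m \<and> (\<forall>h\<in>L. g \<otimes> h [^] m \<otimes> inv g \<in> L))"

lemma
  assumes "g \<in> carrier G"
  shows conj_exponent_pos: "0 < conj_exponent g"
    and conj_exponent_mem_L: "h \<in> L \<Longrightarrow> g \<otimes> h [^] conj_exponent g \<otimes> inv g \<in> L"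
  using someI_ex[OF hecke_pair_conj_nat_pow_mem[OF hecke_pair comm_group_L assms]]
  unfolding conj_exponent_def by auto

definition \<Delta> :: "'g \<Rightarrow> real ^ 'n \<Rightarrow> real ^ 'n" where
  "\<Delta> g = lattice_extension
     (\<lambda>a. (1 / real (conj_exponent g)) *\<^sub>R \<rho> (g \<otimes> \<psi> a [^] conj_exponent g \<otimes> inv g))"

lemma linear_\<Delta>: "linear (\<Delta> g)"
  unfolding \<Delta>_def by (rule linear_lattice_extension)

lemma \<Delta>_\<rho>:
  assumes g: "g \<in> carrier G" and h: "h \<in> L" and conj_h: "g \<otimes> h \<otimes> inv g \<in> L"
  shows "\<Delta> g (\<rho> h) = \<rho> (g \<otimes> h \<otimes> inv g)"
proof -
  let ?m = "conj_exponent g"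
  let ?f = "\<lambda>a. (1 / real ?m) *\<^sub>R \<rho> (g \<otimes> \<psi> a [^] ?m \<otimes> inv g)"
  have "Modules.additive ?f"
  proof
    fix a b
    have "\<psi> (a + b) [^] ?m = \<psi> a [^] ?m \<otimes> \<psi> b [^] ?m"
      using m_comm_L[OF \<psi>_mem_L \<psi>_mem_L]
      by (simp add: \<psi>_add pow_mult_distrib \<psi>_mem_L mem_carrier_if_mem_L)
    then have "g \<otimes> \<psi> (a + b) [^] ?m \<otimes> inv g
        = (g \<otimes> \<psi> a [^] ?m \<otimes> inv g) \<otimes> (g \<otimes> \<psi> b [^] ?m \<otimes> inv g)"
      using g by (simp add: conj_mult \<psi>_mem_L mem_carrier_if_mem_L)
    then show "?f (a + b) = ?f a + ?f b"
      using conj_exponent_mem_L[OF g \<psi>_mem_L] by (simp add: \<rho>_mult scaleR_add_right)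
  qed
  then have "\<Delta> g (\<rho> h) = ?f (\<phi> h)"
    unfolding \<Delta>_def \<rho>_def by (rule lattice_extension_of_int_vec)
  also have "\<dots> = (1 / real ?m) *\<^sub>R \<rho> ((g \<otimes> h \<otimes> inv g) [^] ?m)"
    using g h by (simp add: \<psi>_\<phi> conj_nat_pow mem_carrier_if_mem_L)
  also have "\<dots> = \<rho> (g \<otimes> h \<otimes> inv g)"
    using conj_exponent_pos[OF g] by (simp add: \<rho>_nat_pow[OF conj_h])
  finally show ?thesis .
qed

lemma \<Delta>_extends_conj:
  assumes g: "g \<in> carrier G"
  shows "\<exists>L'. finite_index_in G L' L \<and>
    (\<forall>h\<in>L'. g \<otimes> h \<otimes> inv g \<in> L \<and> \<Delta> g (\<rho> h) = \<rho> (g \<otimes> h \<otimes> inv g))"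
proof (intro exI conjI ballI)
  let ?L' = "{h \<in> L. g \<otimes> h \<otimes> inv g \<in> L}"
  show "finite_index_in G ?L' L"
    using hecke_pair_conj_domain_finite_index[OF hecke_pair g] .
  fix h
  assume "h \<in> ?L'"
  then show "g \<otimes> h \<otimes> inv g \<in> L" "\<Delta> g (\<rho> h) = \<rho> (g \<otimes> h \<otimes> inv g)"
    using \<Delta>_\<rho>[OF g] by simp_all
qed

lemma linear_eq_\<Delta>:
  assumes F: "linear F" and g: "g \<in> carrier G"
    and agree: "\<And>h. h \<in> L \<Longrightarrow> \<exists>k::nat. 0 < k \<and> g \<otimes> h [^] k \<otimes> inv g \<in> L \<and>
                   F (\<rho> (h [^] k)) = \<rho> (g \<otimes> h [^] k \<otimes> inv g)"
  shows "F = \<Delta> g"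
proof (rule linear_eq_on_lattice[OF F linear_\<Delta>])
  fix a
  obtain k :: nat where k: "0 < k" and conj_mem: "g \<otimes> \<psi> a [^] k \<otimes> inv g \<in> L"
    and F_k: "F (\<rho> (\<psi> a [^] k)) = \<rho> (g \<otimes> \<psi> a [^] k \<otimes> inv g)"
    using agree[OF \<psi>_mem_L] by blast
  have "real k *\<^sub>R F (\<rho> (\<psi> a)) = real k *\<^sub>R \<Delta> g (\<rho> (\<psi> a))"
    using F_k \<Delta>_\<rho>[OF g nat_pow_mem_L[OF \<psi>_mem_L] conj_mem]
    by (simp add: \<rho>_nat_pow \<psi>_mem_L linear_cmul[OF F] linear_cmul[OF linear_\<Delta>])
  then show "F (of_int_vec a) = \<Delta> g (of_int_vec a)"
    using k by (simp add: \<rho>_\<psi>)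
qed

lemma \<Delta>_of_mem_L:
  assumes "l \<in> L"
  shows "\<Delta> l = id"
proof (rule linear_eq_\<Delta>[symmetric])
  fix h
  assume "h \<in> L"
  then show "\<exists>k::nat. 0 < k \<and> l \<otimes> h [^] k \<otimes> inv l \<in> L \<and> id (\<rho> (h [^] k)) = \<rho> (l \<otimes> h [^] k \<otimes> inv l)"
    using assms by (intro exI[of _ 1]) (simp add: conj_mem_L mem_carrier_if_mem_L)
qed (use assms mem_carrier_if_mem_L linear_id in auto)

lemma \<Delta>_mult:
  assumes g1: "g1 \<in> carrier G" and g2: "g2 \<in> carrier G"
  shows "\<Delta> (g1 \<otimes> g2) = \<Delta> g1 \<circ> \<Delta> g2"
proof (rule linear_eq_\<Delta>[symmetric])
  fix h
  assume h: "h \<in> L"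
  define m1 where "m1 = conj_exponent g1"
  define m2 where "m2 = conj_exponent g2"
  define x where "x = g2 \<otimes> h [^] m2 \<otimes> inv g2"
  have x: "x \<in> L"
    unfolding x_def m2_def using conj_exponent_mem_L[OF g2 h] .
  have conj2: "g2 \<otimes> h [^] (m2 * m1) \<otimes> inv g2 = x [^] m1"
    unfolding x_def using g2 h by (simp add: conj_nat_pow nat_pow_pow mem_carrier_if_mem_L)
  have conj1: "g1 \<otimes> x [^] m1 \<otimes> inv g1 \<in> L"
    unfolding m1_def using conj_exponent_mem_L[OF g1 x] .
  have conj12: "(g1 \<otimes> g2) \<otimes> h [^] (m2 * m1) \<otimes> inv (g1 \<otimes> g2) = g1 \<otimes> x [^] m1 \<otimes> inv g1"
    using g1 g2 h conj2[symmetric] by (simp add: m_assoc inv_mult_group mem_carrier_if_mem_L)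
  have \<Delta>_h: "(\<Delta> g1 \<circ> \<Delta> g2) (\<rho> (h [^] (m2 * m1))) = \<rho> (g1 \<otimes> x [^] m1 \<otimes> inv g1)"
    using \<Delta>_\<rho>[OF g2 nat_pow_mem_L[OF h]] \<Delta>_\<rho>[OF g1 nat_pow_mem_L[OF x] conj1]
      conj2 nat_pow_mem_L[OF x] by simp
  have "0 < m2 * m1"
    unfolding m1_def m2_def using conj_exponent_pos g1 g2 by simp
  then show "\<exists>k::nat. 0 < k \<and> (g1 \<otimes> g2) \<otimes> h [^] k \<otimes> inv (g1 \<otimes> g2) \<in> L \<and>
      (\<Delta> g1 \<circ> \<Delta> g2) (\<rho> (h [^] k)) = \<rho> ((g1 \<otimes> g2) \<otimes> h [^] k \<otimes> inv (g1 \<otimes> g2))"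
    using conj1 conj12 \<Delta>_h by (intro exI[of _ "m2 * m1"]) simp
qed (use g1 g2 linear_\<Delta> linear_compose in auto)

lemma \<Delta>_top_aut:
  assumes g: "g \<in> carrier G"
  shows "\<Delta> g \<in> top_aut"
proof (rule top_aut_if_linear_inverses[OF linear_\<Delta> linear_\<Delta>])
  have "\<Delta> \<one> = id"
    using \<Delta>_of_mem_L subgroup.one_closed[OF subgroup_L] .
  then show "\<Delta> g \<circ> \<Delta> (inv g) = id" "\<Delta> (inv g) \<circ> \<Delta> g = id"
    using \<Delta>_mult[OF g inv_closed[OF g]] \<Delta>_mult[OF inv_closed[OF g] g] g by simp_all
qed

end

theorem proposition3p6:
  fixes G :: "('g, 'b) monoid_scheme" and L :: "'g set"
  assumes "hecke_pair G L"
    and "G\<lparr>carrier := L\<rparr> \<cong> Zn_group TYPE('n::finite)"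
  shows "engulfing_group G L TYPE(real ^ 'n)"
proof -
  obtain \<phi> where "\<phi> \<in> iso (G\<lparr>carrier := L\<rparr>) (Zn_group TYPE('n))"
    using assms(2) by (auto simp: is_iso_def)
  then interpret lattice_hecke_pair G L \<phi>
    using assms(1) by unfold_locales
  show ?thesis
    unfolding engulfing_group_def
    using locally_compact_space_euclidean \<rho>_mult
      discrete_subset_range_of_int_vec cocompact_subgroup_range_of_int_vec
      \<Delta>_top_aut \<Delta>_mult \<Delta>_of_mem_L \<Delta>_extends_conj
    by (intro exI[of _ \<rho>] exI[of _ \<Delta>] conjI ballI allI) (auto simp: \<rho>_image \<rho>_kernel)
qed

end
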